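(* Let $m \ge 1$ and $n \ge 2m+3$ be integers, and write $p_j = n-2m+2j$. Then for every real $r$ with $|r|<1$, $$\int_{-1}^1 \frac{T_n(s)(1-s^2)^{m-\frac{1}{2}}}{(s-r)^4}\,ds = (-1)^{m+1}\left(\frac{1}{2}\right)^{2m+2}\frac{1}{3}\frac{\pi}{(1-r^2)^2}\sum_{j=0}^{2m-1}(-1)^j\binom{2m-1}{j}(p_j+1)\Big\{(p_j+2)(p_j+3)U_{p_j-2}(r)-\big[2p_j^2+4p_j-6\big]U_{p_j}(r)+p_j(p_j-1)U_{p_j+2}(r)\Big\},$$ where the integral is a Hadamard finite-part integral.
   Context: $T_k(s)=\cos(k\cos^{-1}s)$ and $U_k(s)=\frac{\sin((k+1)\cos^{-1}s)}{\sin(\cos^{-1}s)}$ are the Tchebyshev polynomials of the first and second kinds. For a positive integer $\alpha\ge 2$ and $|r|<1$, the integral $\int_{-1}^1 \frac{D(s)}{(s-r)^\alpha}ds$ is understood in the Hadamard finite-part sense; in particular it satisfies $\int_{-1}^1 \frac{D(s)}{(s-r)^{\alpha}}ds=\frac{1}{\alpha-1}\frac{d}{dr}\int_{-1}^1\frac{D(s)}{(s-r)^{\alpha-1}}ds$, where for $\alpha-1=1$ the right-hand integral is a Cauchy principal value. $\binom{a}{j}=\frac{a!}{j!(a-j)!}$. *)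

theory Defs
  imports "HOL-Analysis.Analysis"
begin

definition chebT :: "nat \<Rightarrow> real \<Rightarrow> real" where
  "chebT k s = cos (real k * arccos s)"

definition chebU :: "nat \<Rightarrow> real \<Rightarrow> real" where
  "chebU k s = sin ((real k + 1) * arccos s) / sin (arccos s)"

definition cpv_integral :: "(real \<Rightarrow> real) \<Rightarrow> real \<Rightarrow> real" where
  "cpv_integral D r =
     Lim (at_right 0)
       (\<lambda>e. integral {-1..r-e} (\<lambda>s. D s / (s - r)) + integral {r+e..1} (\<lambda>s. D s / (s - r)))"

fun hadamard_fp :: "(real \<Rightarrow> real) \<Rightarrow> nat \<Rightarrow> real \<Rightarrow> real" where
  "hadamard_fp D 0 r = undefined"
| "hadamard_fp D (Suc 0) r = cpv_integral D r"
| "hadamard_fp D (Suc (Suc k)) r = deriv (hadamard_fp D (Suc k)) r / real (Suc k)"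

end

theory Submission
  imports Defs
begin

(* With s = cos t, the density T_n(s) (1 - s^2)^(m - 1/2) is cos (n t) sin^(2m-1) t. Expanding
   sin t = (e^(it) - e^(-it)) / (2i) binomially turns it into a combination of the functions
   sin ((p_j + 1) t) = sqrt (1 - s^2) U_(p_j)(s). The principal value of
   sqrt (1 - s^2) U_k(s) / (s - r) is -pi T_(k+1)(r): for k = 0 by an explicit primitive, and
   then by induction along the three-term recurrence, because writing s = (s - r) + r splits off
   a proper integral that vanishes by orthogonality. The finite-part integral of order 4 is the
   third derivative of the principal value divided by 3!, hence a combination of the U''_(p_j)(r),
   and the differential equation of U_p expresses (1 - r^2)^2 U''_p through U_(p-2), U_p and
   U_(p+2). *)

fun chebyshev_T :: "nat \<Rightarrow> real \<Rightarrow> real" where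
  "chebyshev_T 0 x = 1"
| "chebyshev_T (Suc 0) x = x"
| "chebyshev_T (Suc (Suc k)) x = 2 * x * chebyshev_T (Suc k) x - chebyshev_T k x"

fun chebyshev_U :: "nat \<Rightarrow> real \<Rightarrow> real" where
  "chebyshev_U 0 x = 1"
| "chebyshev_U (Suc 0) x = 2 * x"
| "chebyshev_U (Suc (Suc k)) x = 2 * x * chebyshev_U (Suc k) x - chebyshev_U k x"

fun chebyshev_U_deriv :: "nat \<Rightarrow> real \<Rightarrow> real" where
  "chebyshev_U_deriv 0 x = 0"
| "chebyshev_U_deriv (Suc 0) x = 2"
| "chebyshev_U_deriv (Suc (Suc k)) x =
     2 * chebyshev_U (Suc k) x + 2 * x * chebyshev_U_deriv (Suc k) x - chebyshev_U_deriv k x"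

fun chebyshev_U_deriv2 :: "nat \<Rightarrow> real \<Rightarrow> real" where
  "chebyshev_U_deriv2 0 x = 0"
| "chebyshev_U_deriv2 (Suc 0) x = 0"
| "chebyshev_U_deriv2 (Suc (Suc k)) x =
     4 * chebyshev_U_deriv (Suc k) x + 2 * x * chebyshev_U_deriv2 (Suc k) x - chebyshev_U_deriv2 k x"

lemma chebyshev_T_Suc_Suc_eq_U:
  "chebyshev_T (Suc (Suc k)) x = x * chebyshev_U (Suc k) x - chebyshev_U k x"
proof (induction k rule: induct_nat_012)
  case (ge2 k)
  then show ?case by (simp add: algebra_simps) algebra
qed (auto simp: algebra_simps)

lemma chebyshev_U_mult_one_minus_sq:
  "(1 - x\<^sup>2) * chebyshev_U k x = x * chebyshev_T (Suc k) x - chebyshev_T (Suc (Suc k)) x"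
proof (induction k rule: induct_nat_012)
  case (ge2 k)
  then show ?case by (simp add: algebra_simps) algebra
qed (auto simp: algebra_simps power2_eq_square)

lemma has_real_derivative_chebyshev_U:
  "(chebyshev_U k has_real_derivative chebyshev_U_deriv k x) (at x)"
  by (induction k rule: induct_nat_012) (auto intro!: derivative_eq_intros)

lemma has_real_derivative_chebyshev_U_deriv:
  "(chebyshev_U_deriv k has_real_derivative chebyshev_U_deriv2 k x) (at x)"
  by (induction k rule: induct_nat_012)
    (auto intro!: derivative_eq_intros has_real_derivative_chebyshev_U)

lemma has_real_derivative_chebyshev_T:
  "(chebyshev_T (Suc k) has_real_derivative real (Suc k) * chebyshev_U k x) (at x)"
proof (induction k rule: induct_nat_012)
  case (ge2 k)
  have T: "chebyshev_T (Suc (Suc (Suc k)))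
      = (\<lambda>x. 2 * x * chebyshev_T (Suc (Suc k)) x - chebyshev_T (Suc k) x)"
    by auto
  have "((\<lambda>x. 2 * x * chebyshev_T (Suc (Suc k)) x - chebyshev_T (Suc k) x) has_real_derivative
      2 * chebyshev_T (Suc (Suc k)) x + 2 * x * (real (Suc (Suc k)) * chebyshev_U (Suc k) x)
      - real (Suc k) * chebyshev_U k x) (at x)"
    by (auto intro!: derivative_eq_intros ge2 simp del: chebyshev_T.simps)
  moreover have "2 * chebyshev_T (Suc (Suc k)) x
      + 2 * x * (real (Suc (Suc k)) * chebyshev_U (Suc k) x) - real (Suc k) * chebyshev_U k x
      = real (Suc (Suc (Suc k))) * chebyshev_U (Suc (Suc k)) x"
    using chebyshev_T_Suc_Suc_eq_U[of k x] by (simp add: algebra_simps)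
  ultimately show ?case
    unfolding T by simp
qed (auto intro!: derivative_eq_intros)

lemma chebyshev_U_deriv_eq:
  "(1 - x\<^sup>2) * chebyshev_U_deriv k x = x * chebyshev_U k x - real (Suc k) * chebyshev_T (Suc k) x"
proof (induction k rule: induct_nat_012)
  case (ge2 k)
  then show ?case
    using chebyshev_U_mult_one_minus_sq[where k="Suc k" and x=x]
    by (simp add: algebra_simps) algebra
qed (auto simp: algebra_simps power2_eq_square)

lemma chebyshev_U_deriv2_eq:
  "(1 - x\<^sup>2) * chebyshev_U_deriv2 k x
    = 3 * x * chebyshev_U_deriv k x - real k * (real k + 2) * chebyshev_U k x"
proof -
  have "((\<lambda>x. (1 - x\<^sup>2) * chebyshev_U_deriv k x) has_real_derivative
      - 2 * x * chebyshev_U_deriv k x + (1 - x\<^sup>2) * chebyshev_U_deriv2 k x) (at x)"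
    by (auto intro!: derivative_eq_intros has_real_derivative_chebyshev_U_deriv)
  moreover have "((\<lambda>x. x * chebyshev_U k x - real (Suc k) * chebyshev_T (Suc k) x)
      has_real_derivative chebyshev_U k x + x * chebyshev_U_deriv k x
        - real (Suc k) * (real (Suc k) * chebyshev_U k x)) (at x)"
    by (auto intro!: derivative_eq_intros has_real_derivative_chebyshev_U
        has_real_derivative_chebyshev_T)
  ultimately have "- 2 * x * chebyshev_U_deriv k x + (1 - x\<^sup>2) * chebyshev_U_deriv2 k x
      = chebyshev_U k x + x * chebyshev_U_deriv k x - real (Suc k) * (real (Suc k) * chebyshev_U k x)"
    unfolding chebyshev_U_deriv_eq by (rule DERIV_unique)
  then show ?thesis
    by (simp add: algebra_simps power2_eq_square)
qed

lemma chebyshev_U_deriv2_eq_U: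
  assumes "p \<ge> 2"
  shows "4 * (1 - x\<^sup>2)\<^sup>2 * chebyshev_U_deriv2 p x =
    (real p + 2) * (real p + 3) * chebyshev_U (p - 2) x
    - (2 * (real p)\<^sup>2 + 4 * real p - 6) * chebyshev_U p x
    + real p * (real p - 1) * chebyshev_U (p + 2) x"
proof -
  obtain q where q: "p = Suc (Suc q)"
    using assms by (metis add_2_eq_Suc le_Suc_ex)
  show ?thesis
    using chebyshev_T_Suc_Suc_eq_U[where k="Suc q" and x=x] chebyshev_U_deriv_eq[where k=p and x=x]
      chebyshev_U_deriv2_eq[where k=p and x=x]
    unfolding q by (simp add: algebra_simps power2_eq_square) algebra
qed

lemma chebyshev_U_cos: "chebyshev_U k (cos t) * sin t = sin ((real k + 1) * t)"
proof (induction k rule: induct_nat_012)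
  case 1
  then show ?case
    using sin_double[of t] by (simp add: algebra_simps)
next
  case (ge2 k)
  have "sin ((real k + 3) * t) = sin ((real k + 2) * t + t)"
       "sin ((real k + 1) * t) = sin ((real k + 2) * t - t)"
    by (simp_all add: algebra_simps)
  then have "sin ((real k + 3) * t) = 2 * cos t * sin ((real k + 2) * t) - sin ((real k + 1) * t)"
    by (simp add: sin_add sin_diff)
  moreover have "chebyshev_U (Suc (Suc k)) (cos t) * sin t
      = 2 * cos t * (chebyshev_U (Suc k) (cos t) * sin t) - chebyshev_U k (cos t) * sin t"
    by (simp add: algebra_simps)
  ultimately show ?case
    using ge2 by (simp add: algebra_simps)
qed simp

lemma chebU_eq_chebyshev_U:
  assumes "\<bar>s\<bar> < 1"
  shows "chebU k s = chebyshev_U k s"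
proof -
  have "sin (arccos s) > 0"
    using assms by (simp add: sin_arccos abs_square_less_1)
  then show ?thesis
    using chebyshev_U_cos[of k "arccos s"] assms
    by (simp add: chebU_def cos_arccos_abs field_simps)
qed

lemma two_i_sin_power_mult_cis:
  "(2 * \<i> * complex_of_real (sin t)) ^ N * cis (real n * t)
    = (\<Sum>k\<le>N. (-1) ^ (N - k) * of_nat (N choose k) * cis ((real n + 2 * real k - real N) * t))"
proof -
  have "2 * \<i> * complex_of_real (sin t) = cis t + - cis (- t)"
    by (simp add: complex_eq_iff)
  then have "(2 * \<i> * complex_of_real (sin t)) ^ N * cis (real n * t)
      = (\<Sum>k\<le>N. of_nat (N choose k) * cis t ^ k * (- cis (- t)) ^ (N - k) * cis (real n * t))"
    by (simp only: binomial_ring sum_distrib_right)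
  also have "\<dots> = (\<Sum>k\<le>N. (-1) ^ (N - k) * of_nat (N choose k)
                          * cis ((real n + 2 * real k - real N) * t))"
  proof (rule sum.cong[OF refl])
    fix k
    assume "k \<in> {..N}"
    then have "real k * t + real (N - k) * (- t) + real n * t = (real n + 2 * real k - real N) * t"
      by (simp add: of_nat_diff algebra_simps)
    then have "cis t ^ k * cis (- t) ^ (N - k) * cis (real n * t)
        = cis ((real n + 2 * real k - real N) * t)"
      by (simp only: Complex.DeMoivre cis_mult)
    then show "of_nat (N choose k) * cis t ^ k * (- cis (- t)) ^ (N - k) * cis (real n * t)
        = (-1) ^ (N - k) * of_nat (N choose k) * cis ((real n + 2 * real k - real N) * t)"
      unfolding power_minus[of "cis (- t)"] by (metis mult.assoc mult.commute)
  qed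
  finally show ?thesis .
qed

lemma cos_mult_sin_power_odd:
  fixes q n :: nat
  defines "N \<equiv> 2 * q + 1"
  shows "cos (real n * t) * sin t ^ N = (-1) ^ (q + 1) / 2 ^ N *
    (\<Sum>k\<le>N. (-1) ^ k * real (N choose k) * sin ((real n + 2 * real k - real N) * t))"
proof -
  have "\<i> ^ N = (-1) ^ q * \<i>"
    by (simp add: N_def power_mult)
  then have "(2 * \<i> * complex_of_real (sin t)) ^ N
      = \<i> * complex_of_real (2 ^ N * (-1) ^ q * sin t ^ N)"
    by (simp only: power_mult_distrib) simp
  then have "2 ^ N * (-1) ^ q * sin t ^ N * cos (real n * t)
      = (\<Sum>k\<le>N. (-1) ^ (N - k) * real (N choose k) * sin ((real n + 2 * real k - real N) * t))"
    using arg_cong[OF two_i_sin_power_mult_cis[of t N n], where f=Im] by (simp add: Im_sum)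
  also have "\<dots> = - (\<Sum>k\<le>N. (-1) ^ k * real (N choose k)
                           * sin ((real n + 2 * real k - real N) * t))"
    unfolding sum_negf[symmetric]
    by (intro sum.cong refl) (auto simp: N_def power_diff divide_simps)
  finally have "(\<Sum>k\<le>N. (-1) ^ k * real (N choose k) * sin ((real n + 2 * real k - real N) * t))
      = - ((-1) ^ q * 2 ^ N * (cos (real n * t) * sin t ^ N))"
    by (simp add: algebra_simps)
  moreover have "(-1 :: real) ^ (q + 1) * (-1) ^ q = - 1"
    by (simp flip: power_add)
  ultimately show ?thesis
    by (simp add: field_simps)
qed

lemma powr_nat_minus_half:
  fixes y :: real
  assumes "m \<ge> 1" "y \<ge> 0"
  shows "y powr (real m - 1/2) = sqrt y ^ (2 * m - 1)"
proof (cases "y = 0")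
  case True
  with assms(1) show ?thesis by simp
next
  case False
  with assms(2) have "sqrt y > 0" by simp
  have "y powr (real m - 1/2) = (y powr (1/2)) powr real (2 * m - 1)"
    using assms(1) by (simp add: powr_powr of_nat_diff algebra_simps)
  also have "\<dots> = sqrt y ^ (2 * m - 1)"
    using \<open>sqrt y > 0\<close> assms(2) by (simp add: powr_half_sqrt powr_realpow)
  finally show ?thesis .
qed

lemma chebT_mult_weight_expansion:
  assumes "m \<ge> 1" "2 * m \<le> n" "\<bar>s\<bar> \<le> 1"
  shows "chebT n s * (1 - s\<^sup>2) powr (real m - 1/2) = (-1) ^ m / 2 ^ (2 * m - 1) *
    (\<Sum>j = 0..2 * m - 1. (-1) ^ j * real ((2 * m - 1) choose j)
       * (sqrt (1 - s\<^sup>2) * chebyshev_U (n - 2 * m + 2 * j) s))"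
proof -
  define t where "t = arccos s"
  define q where "q = m - 1"
  have N: "2 * m - 1 = 2 * q + 1" and m: "m = q + 1"
    using assms(1) by (simp_all add: q_def)
  have cos_t: "cos t = s" and sin_t: "sin t = sqrt (1 - s\<^sup>2)"
    using assms(3) by (simp_all add: t_def cos_arccos_abs sin_arccos_abs)
  have "(1 - s\<^sup>2) powr (real m - 1/2) = sin t ^ (2 * m - 1)"
    using assms(1,3) by (simp add: sin_t powr_nat_minus_half abs_square_le_1)
  moreover have "sin ((real n + 2 * real j - real (2 * m - 1)) * t)
      = sqrt (1 - s\<^sup>2) * chebyshev_U (n - 2 * m + 2 * j) s" for j
  proof -
    have "real n + 2 * real j - real (2 * m - 1) = real (n - 2 * m + 2 * j) + 1"
      using assms(1,2) by (simp add: of_nat_diff)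
    with chebyshev_U_cos[of "n - 2 * m + 2 * j" t] show ?thesis
      by (simp only: cos_t sin_t mult.commute)
  qed
  ultimately show ?thesis
    using cos_mult_sin_power_odd[of n t q]
    by (simp add: chebT_def t_def[symmetric] N m atLeast0AtMost mult_ac)
qed

definition cpv_truncated :: "(real \<Rightarrow> real) \<Rightarrow> real \<Rightarrow> real \<Rightarrow> real" where
  "cpv_truncated D r e =
     integral {-1..r-e} (\<lambda>s. D s / (s - r)) + integral {r+e..1} (\<lambda>s. D s / (s - r))"

(* cpv_integral is a Lim, which carries no information unless the limit exists, so principal
   values are handled through this limit relation. *)
definition has_cpv :: "(real \<Rightarrow> real) \<Rightarrow> real \<Rightarrow> real \<Rightarrow> bool" where
  "has_cpv D r L \<longleftrightarrow> (cpv_truncated D r \<longlongrightarrow> L) (at_right 0)"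

lemma cpv_integral_eqI: "has_cpv D r L \<Longrightarrow> cpv_integral D r = L"
  unfolding has_cpv_def cpv_integral_def cpv_truncated_def by (rule tendsto_Lim) auto

lemma has_cpv_cong:
  assumes "\<bar>r\<bar> < 1" "\<And>s. \<bar>s\<bar> \<le> 1 \<Longrightarrow> D s = D' s" "has_cpv D r L"
  shows "has_cpv D' r L"
proof -
  have "eventually (\<lambda>e. cpv_truncated D r e = cpv_truncated D' r e) (at_right 0)"
    using eventually_at_right_less
  proof eventually_elim
    case (elim e)
    with assms(1,2) show ?case
      unfolding cpv_truncated_def by (intro arg_cong2[where f="(+)"] integral_cong) auto
  qed
  with assms(3) show ?thesis
    unfolding has_cpv_def by (rule tendsto_cong[THEN iffD1, rotated])
qed

lemma has_cpv_cmult: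
  assumes "has_cpv D r L"
  shows "has_cpv (\<lambda>s. c * D s) r (c * L)"
proof -
  have "cpv_truncated (\<lambda>s. c * D s) r = (\<lambda>e. c * cpv_truncated D r e)"
    by (simp add: cpv_truncated_def distrib_left fun_eq_iff flip: times_divide_eq_right)
  with assms show ?thesis
    unfolding has_cpv_def by (simp add: tendsto_mult_left)
qed

lemma has_cpv_add:
  assumes "\<bar>r\<bar> < 1" "continuous_on {-1..1} D" "continuous_on {-1..1} D'"
    and "has_cpv D r L" "has_cpv D' r L'"
  shows "has_cpv (\<lambda>s. D s + D' s) r (L + L')"
proof -
  have int: "(\<lambda>s. f s / (s - r)) integrable_on {a..b}"
    if "continuous_on {-1..1} f" "{a..b} \<subseteq> {-1..1}" "r \<notin> {a..b}" for f a b
    using that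
    by (intro integrable_continuous_interval continuous_intros continuous_on_subset[OF that(1)]) auto
  have "eventually (\<lambda>e. cpv_truncated D r e + cpv_truncated D' r e
      = cpv_truncated (\<lambda>s. D s + D' s) r e) (at_right 0)"
    using eventually_at_right_less
  proof eventually_elim
    case (elim e)
    have "(\<lambda>s. (D s + D' s) / (s - r)) = (\<lambda>s. D s / (s - r) + D' s / (s - r))"
      by (simp add: add_divide_distrib)
    moreover have "{-1..r-e} \<subseteq> {-1..1}" "r \<notin> {-1..r-e}" "{r+e..1} \<subseteq> {-1..1}" "r \<notin> {r+e..1}"
      using elim assms(1) by auto
    ultimately show ?case
      unfolding cpv_truncated_def using assms(2,3) by (simp add: integral_add int)
  qed
  moreover have "((\<lambda>e. cpv_truncated D r e + cpv_truncated D' r e) \<longlongrightarrow> L + L') (at_right 0)"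
    using assms(4,5) unfolding has_cpv_def by (rule tendsto_add)
  ultimately show ?thesis
    unfolding has_cpv_def by (rule Lim_transform_eventually[rotated])
qed

lemma has_cpv_sum:
  assumes "\<bar>r\<bar> < 1" "finite J" "\<And>j. j \<in> J \<Longrightarrow> continuous_on {-1..1} (D j)"
    and "\<And>j. j \<in> J \<Longrightarrow> has_cpv (D j) r (L j)"
  shows "has_cpv (\<lambda>s. \<Sum>j\<in>J. D j s) r (\<Sum>j\<in>J. L j)"
  using assms(2-)
proof (induction J rule: finite_induct)
  case empty
  then show ?case
    by (simp add: has_cpv_def cpv_truncated_def[abs_def])
next
  case (insert j J)
  then show ?case
    by (simp add: has_cpv_add[OF assms(1)] continuous_on_sum)
qed

lemma isCont_tendsto_at_right_0:
  fixes h :: "real \<Rightarrow> 'a::topological_space"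
  assumes "isCont h r"
  shows "((\<lambda>e. h (r - e)) \<longlongrightarrow> h r) (at_right 0)"
    and "((\<lambda>e. h (r + e)) \<longlongrightarrow> h r) (at_right 0)"
proof -
  have "((\<lambda>e. r - e) \<longlongrightarrow> r - 0) (at_right 0)" "((\<lambda>e. r + e) \<longlongrightarrow> r + 0) (at_right 0)"
    by (intro tendsto_intros)+
  then show "((\<lambda>e. h (r - e)) \<longlongrightarrow> h r) (at_right 0)" "((\<lambda>e. h (r + e)) \<longlongrightarrow> h r) (at_right 0)"
    by (auto intro: isCont_tendsto_compose[OF assms])
qed

lemma has_cpv_mult_diff:
  assumes "\<bar>r\<bar> < 1" "continuous_on {-1..1} g"
  shows "has_cpv (\<lambda>s. (s - r) * g s) r (integral {-1..1} g)"
proof -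
  have g: "g integrable_on {-1..1}"
    using assms(2) by (rule integrable_continuous_interval)
  define F where "F x = integral {-1..x} g" for x
  define F' where "F' x = integral {x..1} g" for x
  have "isCont F r" "isCont F' r"
    unfolding F_def F'_def using assms(1)
    by (intro continuous_on_interior[OF indefinite_integral_continuous_1[OF g]]
          continuous_on_interior[OF indefinite_integral_continuous_1'[OF g]]; auto)+
  then have "((\<lambda>e. F (r - e) + F' (r + e)) \<longlongrightarrow> F r + F' r) (at_right 0)"
    by (intro tendsto_add isCont_tendsto_at_right_0)
  moreover have "F r + F' r = integral {-1..1} g"
    unfolding F_def F'_def using assms(1) g
    by (intro Henstock_Kurzweil_Integration.integral_combine) auto
  moreover have "eventually (\<lambda>e. F (r - e) + F' (r + e)
      = cpv_truncated (\<lambda>s. (s - r) * g s) r e) (at_right 0)"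
    using eventually_at_right_less
  proof eventually_elim
    case (elim e)
    then show ?case
      unfolding cpv_truncated_def F_def F'_def
      by (intro arg_cong2[where f="(+)"] integral_cong) auto
  qed
  ultimately show ?thesis
    unfolding has_cpv_def by (auto intro: Lim_transform_eventually)
qed

lemma has_cpv_mult_id:
  assumes "\<bar>r\<bar> < 1" "continuous_on {-1..1} g" "has_cpv g r L"
  shows "has_cpv (\<lambda>s. s * g s) r (integral {-1..1} g + r * L)"
proof -
  have "has_cpv (\<lambda>s. (s - r) * g s + r * g s) r (integral {-1..1} g + r * L)"
    using assms by (intro has_cpv_add has_cpv_mult_diff has_cpv_cmult continuous_intros) auto
  then show ?thesis
    by (simp add: algebra_simps)
qed

lemma has_real_derivative_ln_abs [derivative_intros]:
  assumes "(f has_real_derivative f') (at x within S)" "f x \<noteq> 0"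
  shows "((\<lambda>x. ln \<bar>f x\<bar>) has_real_derivative f' / f x) (at x within S)"
proof -
  have "(\<lambda>x. ln \<bar>x\<bar>) = (\<lambda>x::real. ln (x\<^sup>2) / 2)"
  proof
    fix y :: real
    show "ln \<bar>y\<bar> = ln (y\<^sup>2) / 2"
      using ln_realpow[of "\<bar>y\<bar>" 2] by (cases "y = 0") simp_all
  qed
  moreover have "0 < f x * f x"
    using assms(2) by (metis not_real_square_gt_zero)
  then have "((\<lambda>y. ln (y\<^sup>2) / 2) has_real_derivative 1 / f x) (at (f x))"
    by (auto intro!: derivative_eq_intros simp: field_simps power2_eq_square)
  ultimately show ?thesis
    using DERIV_chain2[of "\<lambda>x. ln \<bar>x\<bar>" "1 / f x" f x f' S] assms(1) by simp
qed

lemma integral_eq_diff_of_real_derivative: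
  fixes f f' :: "real \<Rightarrow> real"
  assumes "a \<le> b" "continuous_on {a..b} f"
    and "\<And>x. a < x \<Longrightarrow> x < b \<Longrightarrow> (f has_real_derivative f' x) (at x)"
  shows "integral {a..b} f' = f b - f a"
  using fundamental_theorem_of_calculus_interior[of a b f f'] assms
  by (auto simp: has_real_derivative_iff_has_vector_derivative integral_unique)

lemma has_real_derivative_sqrt_one_minus_sq:
  assumes "\<bar>s\<bar> < 1"
  shows "((\<lambda>s. sqrt (1 - s\<^sup>2)) has_real_derivative - s / sqrt (1 - s\<^sup>2)) (at s)"
proof -
  have "1 - s\<^sup>2 > 0"
    using assms by (simp add: abs_square_less_1)
  then show ?thesis
    by (auto intro!: derivative_eq_intros simp: field_simps power2_eq_square)
qed

(* For k = 0 the term sin (k \<theta>) / k is replaced by its limit \<theta>. *)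
lemma sin_mult_sin_primitive:
  "((\<lambda>\<theta>. (sin ((real k + 2) * \<theta>) / (real k + 2)
          - (if k = 0 then \<theta> else sin (real k * \<theta>) / real k)) / 2)
     has_real_derivative - (sin ((real k + 1) * \<theta>) * sin \<theta>)) (at \<theta>)"
proof -
  have "cos ((real k + 2) * \<theta>) = cos ((real k + 1) * \<theta> + \<theta>)"
       "cos (real k * \<theta>) = cos ((real k + 1) * \<theta> - \<theta>)"
    by (simp_all add: algebra_simps)
  then have "(cos ((real k + 2) * \<theta>) - cos (real k * \<theta>)) / 2
      = - (sin ((real k + 1) * \<theta>) * sin \<theta>)"
    by (simp add: cos_add cos_diff)
  moreover have "((\<lambda>\<theta>. (sin ((real k + 2) * \<theta>) / (real k + 2)
          - (if k = 0 then \<theta> else sin (real k * \<theta>) / real k)) / 2)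
     has_real_derivative (cos ((real k + 2) * \<theta>) - cos (real k * \<theta>)) / 2) (at \<theta>)"
    by (cases "k = 0") (auto intro!: derivative_eq_intros)
  ultimately show ?thesis
    by simp
qed

lemma integral_sqrt_mult_chebyshev_U:
  "integral {-1..1} (\<lambda>s. sqrt (1 - s\<^sup>2) * chebyshev_U k s) = (if k = 0 then pi / 2 else 0)"
proof -
  define F where "F \<theta> = (sin ((real k + 2) * \<theta>) / (real k + 2)
    - (if k = 0 then \<theta> else sin (real k * \<theta>) / real k)) / 2" for \<theta>
  have dF: "(F has_real_derivative - (sin ((real k + 1) * \<theta>) * sin \<theta>)) (at \<theta>)" for \<theta>
    unfolding F_def by (rule sin_mult_sin_primitive)
  have "integral {-1..1} (\<lambda>s. sqrt (1 - s\<^sup>2) * chebyshev_U k s) = F (arccos 1) - F (arccos (-1))"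
  proof (rule integral_eq_diff_of_real_derivative)
    have "continuous_on UNIV F"
      using dF by (intro DERIV_continuous_on) auto
    then show "continuous_on {-1..1} (\<lambda>s. F (arccos s))"
      by (intro continuous_on_compose2[OF _ continuous_on_arccos']) auto
  next
    fix s :: real
    assume s: "-1 < s" "s < 1"
    then have sin_pos: "sin (arccos s) > 0" and sin_eq: "sin (arccos s) = sqrt (1 - s\<^sup>2)"
      by (simp_all add: sin_arccos_nonzero sin_arccos abs_square_less_1 abs_less_iff)
    have "sqrt (1 - s\<^sup>2) * chebyshev_U k s = sin ((real k + 1) * arccos s)"
      using chebyshev_U_cos[of k "arccos s"] s by (simp add: cos_arccos sin_eq mult.commute)
    then have "- (sin ((real k + 1) * arccos s) * sin (arccos s)) * inverse (- sqrt (1 - s\<^sup>2))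
        = sqrt (1 - s\<^sup>2) * chebyshev_U k s"
      using sin_pos by (simp add: sin_eq)
    then show "((\<lambda>s. F (arccos s)) has_real_derivative sqrt (1 - s\<^sup>2) * chebyshev_U k s) (at s)"
      using DERIV_chain2[OF dF DERIV_arccos[OF s]] by simp
  qed simp
  also have "\<dots> = (if k = 0 then pi / 2 else 0)"
    using sin_npi[of "k + 2"] sin_npi[of k] by (simp add: F_def add.commute)
  finally show ?thesis .
qed

(* With c = sqrt (1 - r^2), split sqrt (1 - s^2) / (s - r) into -(s + r) / sqrt (1 - s^2) and
   c^2 / ((s - r) sqrt (1 - s^2)). The first has primitive sqrt (1 - s^2) - r arcsin s, the second
   c (ln |s - r| - ln (1 - r s + c sqrt (1 - s^2))). The singular term c ln |s - r| is left out
   here: it is the same at r - e and r + e, so it cancels in the principal value. *)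
definition sqrt_cpv_primitive :: "real \<Rightarrow> real \<Rightarrow> real" where
  "sqrt_cpv_primitive r s = sqrt (1 - s\<^sup>2) - r * arcsin s
     - sqrt (1 - r\<^sup>2) * ln (1 - r * s + sqrt (1 - r\<^sup>2) * sqrt (1 - s\<^sup>2))"

lemma sqrt_cpv_log_arg_pos:
  assumes "\<bar>r\<bar> < 1" "\<bar>s\<bar> \<le> 1"
  shows "1 - r * s + sqrt (1 - r\<^sup>2) * sqrt (1 - s\<^sup>2) > 0"
proof -
  have "\<bar>r\<bar> * \<bar>s\<bar> \<le> \<bar>r\<bar>"
    using assms(2) by (simp add: mult_left_le)
  then have "\<bar>r * s\<bar> < 1"
    using assms(1) by (simp add: abs_mult)
  moreover have "sqrt (1 - r\<^sup>2) * sqrt (1 - s\<^sup>2) \<ge> 0"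
    using assms by (simp add: abs_square_le_1 abs_square_less_1 less_imp_le)
  ultimately show ?thesis
    by linarith
qed

lemma continuous_on_sqrt_cpv_primitive:
  assumes "\<bar>r\<bar> < 1"
  shows "continuous_on {-1..1} (sqrt_cpv_primitive r)"
  unfolding sqrt_cpv_primitive_def[abs_def]
proof (intro continuous_intros continuous_on_arcsin' ballI)
  fix s :: real
  assume "s \<in> {-1..1}"
  then show "1 - r * s + sqrt (1 - r\<^sup>2) * sqrt (1 - s\<^sup>2) \<noteq> 0"
    using sqrt_cpv_log_arg_pos[OF assms, of s] by (auto simp: abs_le_iff)
qed auto

lemma has_real_derivative_sqrt_cpv_primitive:
  assumes r: "\<bar>r\<bar> < 1" and s: "\<bar>s\<bar> < 1" "s \<noteq> r"
  shows "((\<lambda>s. sqrt_cpv_primitive r s + sqrt (1 - r\<^sup>2) * ln \<bar>s - r\<bar>)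
           has_real_derivative sqrt (1 - s\<^sup>2) / (s - r)) (at s)"
proof -
  define c where "c = sqrt (1 - r\<^sup>2)"
  define w where "w = sqrt (1 - s\<^sup>2)"
  define B where "B = 1 - r * s + c * w"
  have c2: "c\<^sup>2 = 1 - r\<^sup>2" and w2: "w\<^sup>2 = 1 - s\<^sup>2" and "w > 0" and "s\<^sup>2 < 1"
    using r s by (simp_all add: c_def w_def abs_square_less_1 less_imp_le)
  have "B > 0"
    unfolding B_def c_def w_def using r s by (intro sqrt_cpv_log_arg_pos) auto
  have "(r * w + c * s) * (s - r) + w * B = c * B"
    unfolding B_def using c2 w2 by algebra
  then have derivative_eq: "- s / w - r * inverse w - c * ((- r + c * (- s / w)) / B)
      + c * (1 / (s - r)) = w / (s - r)"
    using \<open>w > 0\<close> \<open>B > 0\<close> s(2) c2 w2 by (simp add: field_simps) algebra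
  have "((\<lambda>s. sqrt_cpv_primitive r s + c * ln \<bar>s - r\<bar>) has_real_derivative
      - s / w - r * inverse w - c * ((- r + c * (- s / w)) / B) + c * (1 / (s - r))) (at s)"
    unfolding sqrt_cpv_primitive_def[abs_def] c_def[symmetric]
    using s \<open>B > 0\<close> \<open>w > 0\<close> \<open>s\<^sup>2 < 1\<close>
      has_real_derivative_sqrt_one_minus_sq[OF s(1)] DERIV_arcsin[of s]
    by (auto intro!: derivative_eq_intros simp: w_def[symmetric] B_def[symmetric] abs_less_iff)
      (simp_all add: field_simps)
  then show ?thesis
    unfolding derivative_eq by (simp add: c_def w_def)
qed

lemma has_cpv_sqrt_one_minus_sq:
  assumes r: "\<bar>r\<bar> < 1"
  shows "has_cpv (\<lambda>s. sqrt (1 - s\<^sup>2)) r (- pi * r)"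
proof -
  define \<Psi> where "\<Psi> = sqrt_cpv_primitive r"
  define P where "P s = \<Psi> s + sqrt (1 - r\<^sup>2) * ln \<bar>s - r\<bar>" for s
  have cont: "continuous_on {a..b} P" if "{a..b} \<subseteq> {-1..1}" "r \<notin> {a..b}" for a b
    unfolding P_def \<Psi>_def using that
    by (intro continuous_intros continuous_on_subset[OF continuous_on_sqrt_cpv_primitive[OF r]])
      auto
  have deriv: "(P has_real_derivative sqrt (1 - s\<^sup>2) / (s - r)) (at s)"
    if "-1 < s" "s < 1" "s \<noteq> r" for s
    unfolding P_def[abs_def] \<Psi>_def using that r
    by (intro has_real_derivative_sqrt_cpv_primitive) auto
  have "P 1 - P (-1) = - pi * r"
    using r by (simp add: P_def \<Psi>_def sqrt_cpv_primitive_def abs_minus_commute add.commute)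
  have trunc: "cpv_truncated (\<lambda>s. sqrt (1 - s\<^sup>2)) r e = \<Psi> (r - e) - \<Psi> (r + e) - pi * r"
    if e: "0 < e" "e < 1 - \<bar>r\<bar>" for e
  proof -
    have "integral {-1..r-e} (\<lambda>s. sqrt (1 - s\<^sup>2) / (s - r)) = P (r - e) - P (-1)"
      using e by (intro integral_eq_diff_of_real_derivative cont deriv) auto
    moreover have "integral {r+e..1} (\<lambda>s. sqrt (1 - s\<^sup>2) / (s - r)) = P 1 - P (r + e)"
      using e by (intro integral_eq_diff_of_real_derivative cont deriv) auto
    ultimately show ?thesis
      using \<open>P 1 - P (-1) = - pi * r\<close> by (simp add: cpv_truncated_def P_def)
  qed
  have "isCont \<Psi> r"
    unfolding \<Psi>_def using r
    by (intro continuous_on_interior[OF continuous_on_sqrt_cpv_primitive[OF r]]) auto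
  then have "((\<lambda>e. \<Psi> (r - e) - \<Psi> (r + e) - pi * r) \<longlongrightarrow> \<Psi> r - \<Psi> r - pi * r) (at_right 0)"
    by (intro tendsto_intros isCont_tendsto_at_right_0)
  moreover have "eventually (\<lambda>e. \<Psi> (r - e) - \<Psi> (r + e) - pi * r
      = cpv_truncated (\<lambda>s. sqrt (1 - s\<^sup>2)) r e) (at_right 0)"
    unfolding eventually_at_right_field using r
    by (intro exI[of _ "1 - \<bar>r\<bar>"]) (auto simp: trunc)
  ultimately show ?thesis
    unfolding has_cpv_def by (auto intro: Lim_transform_eventually)
qed

lemma continuous_on_chebyshev_U: "continuous_on S (chebyshev_U k)"
  using has_real_derivative_chebyshev_U by (intro DERIV_continuous_on) (blast intro: DERIV_subset)

lemma has_cpv_sqrt_mult_chebyshev_U: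
  assumes r: "\<bar>r\<bar> < 1"
  shows "has_cpv (\<lambda>s. sqrt (1 - s\<^sup>2) * chebyshev_U k s) r (- pi * chebyshev_T (Suc k) r)"
proof (induction k rule: induct_nat_012)
  case 0
  show ?case
    using has_cpv_sqrt_one_minus_sq[OF r] by simp
next
  case 1
  have "has_cpv (\<lambda>s. 2 * (s * sqrt (1 - s\<^sup>2))) r
      (2 * (integral {-1..1} (\<lambda>s. sqrt (1 - s\<^sup>2)) + r * (- pi * r)))"
    using r has_cpv_sqrt_one_minus_sq[OF r]
    by (intro has_cpv_cmult has_cpv_mult_id continuous_intros)
  then show ?case
    using integral_sqrt_mult_chebyshev_U[of 0] by (simp add: algebra_simps power2_eq_square)
next
  case (ge2 k)
  (* The proper integral split off by has_cpv_mult_id vanishes by orthogonality. *)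
  have "has_cpv (\<lambda>s. 2 * (s * (sqrt (1 - s\<^sup>2) * chebyshev_U (Suc k) s))
                     + (-1) * (sqrt (1 - s\<^sup>2) * chebyshev_U k s)) r
      (2 * (integral {-1..1} (\<lambda>s. sqrt (1 - s\<^sup>2) * chebyshev_U (Suc k) s)
            + r * (- pi * chebyshev_T (Suc (Suc k)) r))
       + (-1) * (- pi * chebyshev_T (Suc k) r))"
    using r ge2
    by (intro has_cpv_add has_cpv_cmult has_cpv_mult_id continuous_intros continuous_on_chebyshev_U)
  then show ?case
    using integral_sqrt_mult_chebyshev_U[of "Suc k"] by (simp add: algebra_simps)
qed

lemma cpv_integral_chebT_mult_weight:
  assumes "m \<ge> 1" "2 * m \<le> n" "\<bar>r\<bar> < 1"
  shows "cpv_integral (\<lambda>s. chebT n s * (1 - s\<^sup>2) powr (real m - 1/2)) r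
    = (-1) ^ m / 2 ^ (2 * m - 1) * (\<Sum>j = 0..2 * m - 1. (-1) ^ j * real ((2 * m - 1) choose j)
        * (- pi * chebyshev_T (Suc (n - 2 * m + 2 * j)) r))"
  using assms
  by (intro cpv_integral_eqI has_cpv_cong[OF assms(3) chebT_mult_weight_expansion[symmetric]]
      has_cpv_cmult has_cpv_sum has_cpv_sqrt_mult_chebyshev_U continuous_intros
      continuous_on_chebyshev_U) auto

lemma hadamard_fp_Suc_Suc_eqI:
  assumes "\<And>y. \<bar>y\<bar> < 1 \<Longrightarrow> hadamard_fp D (Suc k) y = g y"
    and "\<And>y. \<bar>y\<bar> < 1 \<Longrightarrow> (g has_real_derivative real (Suc k) * h y) (at y)"
    and "\<bar>x\<bar> < 1"
  shows "hadamard_fp D (Suc (Suc k)) x = h x"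
proof -
  have "(hadamard_fp D (Suc k) has_real_derivative real (Suc k) * h x) (at x)"
    using assms
    by (intro has_field_derivative_transform_within_open[OF assms(2)[OF assms(3)], of "ball 0 1"])
      auto
  then show ?thesis
    by (simp add: DERIV_imp_deriv del: of_nat_Suc)
qed

lemma hadamard_fp_4_chebT_mult_weight:
  assumes "m \<ge> 1" "2 * m \<le> n" "\<bar>r\<bar> < 1"
  shows "hadamard_fp (\<lambda>s. chebT n s * (1 - s\<^sup>2) powr (real m - 1/2)) 4 r
    = - pi * (-1) ^ m / 2 ^ (2 * m - 1) / 6 *
      (\<Sum>j = 0..2 * m - 1. (-1) ^ j * real ((2 * m - 1) choose j)
         * real (Suc (n - 2 * m + 2 * j)) * chebyshev_U_deriv2 (n - 2 * m + 2 * j) r)"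
proof -
  define D where "D = (\<lambda>s. chebT n s * (1 - s\<^sup>2) powr (real m - 1/2))"
  define K where "K = - pi * (-1) ^ m / 2 ^ (2 * m - 1)"
  define p where "p j = n - 2 * m + 2 * j" for j
  define b where "b j = (-1) ^ j * real ((2 * m - 1) choose j)" for j
  define J where "J = {0..2 * m - 1}"
  have H1: "hadamard_fp D (Suc 0) y = K * (\<Sum>j\<in>J. b j * chebyshev_T (Suc (p j)) y)"
    if "\<bar>y\<bar> < 1" for y
    using cpv_integral_chebT_mult_weight[of m n y] assms that
    by (simp add: D_def K_def b_def p_def J_def sum_distrib_left mult_ac)
  have H2: "hadamard_fp D (Suc (Suc 0)) y
      = K * (\<Sum>j\<in>J. b j * (real (Suc (p j)) * chebyshev_U (p j) y))"
    if "\<bar>y\<bar> < 1" for y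
    by (rule hadamard_fp_Suc_Suc_eqI[OF H1 _ that])
      (auto intro!: DERIV_cmult DERIV_sum has_real_derivative_chebyshev_T[THEN DERIV_cong])
  have H3: "hadamard_fp D (Suc (Suc (Suc 0))) y
      = K * (\<Sum>j\<in>J. b j * (real (Suc (p j)) * chebyshev_U_deriv (p j) y)) / 2"
    if "\<bar>y\<bar> < 1" for y
    by (rule hadamard_fp_Suc_Suc_eqI[OF H2 _ that])
      (auto intro!: DERIV_cmult DERIV_sum has_real_derivative_chebyshev_U)
  have "hadamard_fp D (Suc (Suc (Suc (Suc 0)))) r
      = K * (\<Sum>j\<in>J. b j * (real (Suc (p j)) * chebyshev_U_deriv2 (p j) r)) / 6"
    by (rule hadamard_fp_Suc_Suc_eqI[OF H3 _ assms(3)])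
      (auto intro!: DERIV_cdivide DERIV_cmult DERIV_sum has_real_derivative_chebyshev_U_deriv)
  then show ?thesis
    by (simp add: numeral_eq_Suc D_def K_def b_def p_def J_def mult_ac del: hadamard_fp.simps)
qed

lemma chebyshev_U_deriv2_eq_chebU:
  assumes "p \<ge> 2" "\<bar>r\<bar> < 1"
  shows "chebyshev_U_deriv2 p r =
    ((real p + 2) * (real p + 3) * chebU (p - 2) r
     - (2 * (real p)\<^sup>2 + 4 * real p - 6) * chebU p r
     + real p * (real p - 1) * chebU (p + 2) r) / (4 * (1 - r\<^sup>2)\<^sup>2)"
proof -
  have "r\<^sup>2 < 1"
    using assms(2) by (simp add: abs_square_less_1)
  then show ?thesis
    using chebyshev_U_deriv2_eq_U[OF assms(1), of r]
    by (simp add: chebU_eq_chebyshev_U[OF assms(2)] field_simps)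
qed

theorem mainTheorem7:
  fixes m n :: nat and r :: real
  assumes "m \<ge> 1" and "n \<ge> 2 * m + 3" and "\<bar>r\<bar> < 1"
  shows "hadamard_fp (\<lambda>s. chebT n s * (1 - s\<^sup>2) powr (real m - 1/2)) 4 r =
    (-1) ^ (m + 1) * (1/2) ^ (2 * m + 2) * (1/3) * (pi / (1 - r\<^sup>2)\<^sup>2) *
    (\<Sum>j = 0..2 * m - 1.
       (let p = n - 2 * m + 2 * j in
        (-1) ^ j * real ((2 * m - 1) choose j) * (real p + 1) *
        ((real p + 2) * (real p + 3) * chebU (p - 2) r
         - (2 * (real p)\<^sup>2 + 4 * real p - 6) * chebU p r
         + real p * (real p - 1) * chebU (p + 2) r)))"
proof -
  have "2 * m \<le> n"
    using assms(2) by simp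
  have "2 * m + 2 = (2 * m - 1) + 3"
    using assms(1) by simp
  then have "(1/2 :: real) ^ (2 * m + 2) = (1/2) ^ (2 * m - 1) / 8"
    by (simp only: power_add) (simp add: eval_nat_numeral)
  then show ?thesis
    unfolding hadamard_fp_4_chebT_mult_weight[OF assms(1) \<open>2 * m \<le> n\<close> assms(3)]
      sum_distrib_left sum_divide_distrib
    using assms(2,3)
    by (intro sum.cong refl) (simp add: chebyshev_U_deriv2_eq_chebU Let_def field_simps)
qed

end
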